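(* Let $n\ge4$, and let $x_1,\dots,x_{2n}$ and $z_2,z_4,\dots,z_{2n}$ be the elements of the boundary algebra $e_b\Lambda_{Q_F(n)}e_b$ defined below. Then for all $k\in[1,n]$, with indices modulo $2n$, $$\text{(I)}\quad z_{2k}z_{2k-2}=x_{2k+1}x_{2k+2}\cdots x_{2k+2(n-2)},\qquad \text{(II)}\quad x_{2k+1}x_{2k+2}z_{2k+2}=z_{2k}x_{2k-1}x_{2k}$$ hold in $e_b\Lambda_{Q_F(n)}e_b$.
   Context: Paths are composed from left to right. The dimer algebra of a dimer model with boundary $Q$ is $\Lambda_Q=\mathbb{C}Q/\langle\partial W\rangle$, where $\partial W$ consists of the relations $p_1\cdots p_k=q_1\cdots q_l$, one for each internal arrow $\alpha$ lying on the anticlockwise face boundary $\alpha p_1\cdots p_k$ and the clockwise face boundary $\alpha q_1\cdots q_l$; $e_b$ is the sum of the trivial paths at the boundary vertices. GL$_2$-dimer quiver: for a triangulation $T$ of a convex $n$-gon $P$ with vertices $v_1,\dots,v_n$ anticlockwise, subdivide each triangle of $T$ by the midlines into $4$ small triangles; put a black node at the midpoint of each half-side of each triangle and in each downward (middle) small triangle, and a white node in each of the three upward small triangles; join nodes of different colour lying in the same small triangle or in small triangles sharing a side. The quiver has a vertex for each component of the complement of this graph in $P$ and an arrow across each edge, oriented with the white endpoint on its left; white nodes give anticlockwise faces, black nodes of degree $\ge 2$ clockwise faces; 2-cycles of internal arrows are removed via the potential (reduced quiver). $Q_F(n)$: the reduced quiver for the fan triangulation with diagonals $v_1v_{k+2}$,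 $k=1,\dots,n-3$. It has boundary vertices $1,\dots,2n$ (anticlockwise, $2j-1$ being the component at corner $v_j$), internal vertices $i_1,\dots,i_{n-3}$, and arrows $x_k:k-1\to k$ ($k\in[1,2n]$, mod $2n$), $y_4:4\to2$, $y_{2n}:2n\to 2n-2$, $\alpha_0:2\to i_1$, $\alpha_k:i_k\to i_{k+1}$ ($1\le k<n-3$), $\alpha_{n-3}:i_{n-3}\to 2n$, $\beta_{k-1}:i_k\to 2k+2$ and $\gamma_k:2k+4\to i_k$ ($1\le k\le n-3$). The paths $z_{2k}:2k\to 2k-2$ are $z_{2k}:=\gamma_{k-2}\beta_{k-3}$ for $k=3,\dots,n-1$, $z_4:=y_4$, $z_2:=\alpha_0\alpha_1\cdots\alpha_{n-3}$, $z_{2n}:=y_{2n}$. *)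

theory Defs
  imports Complex_Main
begin

datatype vert = Bd nat | Iv nat

text \<open>Arrows: X k is x_k, Y4 is y_4, Y2n is y_{2n}, Al k is alpha_k, Be k is beta_k,
  Ga k is gamma_k.\<close>
datatype arr = X nat | Y4 | Y2n | Al nat | Be nat | Ga nat

text \<open>Boundary index modulo 2n, with representatives in [1,2n].\<close>
definition bix :: "nat \<Rightarrow> nat \<Rightarrow> nat" where
  "bix n k = (k + 2*n - 1) mod (2*n) + 1"

fun asrc :: "nat \<Rightarrow> arr \<Rightarrow> vert" where
  "asrc n (X k) = Bd (bix n (k - 1))"
| "asrc n Y4 = Bd 4"
| "asrc n Y2n = Bd (2*n)"
| "asrc n (Al k) = (if k = 0 then Bd 2 else Iv k)"
| "asrc n (Be j) = Iv (j + 1)"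
| "asrc n (Ga k) = Bd (2*k + 4)"

fun atgt :: "nat \<Rightarrow> arr \<Rightarrow> vert" where
  "atgt n (X k) = Bd k"
| "atgt n Y4 = Bd 2"
| "atgt n Y2n = Bd (2*n - 2)"
| "atgt n (Al k) = (if k = n - 3 then Bd (2*n) else Iv (k + 1))"
| "atgt n (Be j) = Bd (2*j + 4)"
| "atgt n (Ga k) = Iv k"

fun valid_vert :: "nat \<Rightarrow> vert \<Rightarrow> bool" where
  "valid_vert n (Bd k) = (1 \<le> k \<and> k \<le> 2*n)"
| "valid_vert n (Iv k) = (1 \<le> k \<and> k \<le> n - 3)"

fun valid_arr :: "nat \<Rightarrow> arr \<Rightarrow> bool" where
  "valid_arr n (X k) = (1 \<le> k \<and> k \<le> 2*n)"
| "valid_arr n Y4 = True"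
| "valid_arr n Y2n = True"
| "valid_arr n (Al k) = (k \<le> n - 3)"
| "valid_arr n (Be j) = (j + 1 \<le> n - 3)"
| "valid_arr n (Ga k) = (1 \<le> k \<and> k \<le> n - 3)"

fun internal_arr :: "arr \<Rightarrow> bool" where
  "internal_arr (X k) = False"
| "internal_arr _ = True"

section \<open>Paths (composed left to right)\<close>

text \<open>A path is a start vertex together with a list of arrows; P v [] is the trivial path e_v.\<close>
datatype path = P vert "arr list"

fun composable :: "nat \<Rightarrow> arr list \<Rightarrow> bool" where
  "composable n [] = True"
| "composable n [a] = True"
| "composable n (a # b # as) = (atgt n a = asrc n b \<and> composable n (b # as))"

fun valid_path :: "nat \<Rightarrow> path \<Rightarrow> bool" where
  "valid_path n (P v as) = (valid_vert n v \<and> (\<forall>a\<in>set as. valid_arr n a) \<and> composable n as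
      \<and> (as \<noteq> [] \<longrightarrow> asrc n (hd as) = v))"

fun ptgt :: "nat \<Rightarrow> path \<Rightarrow> vert" where
  "ptgt n (P v as) = (if as = [] then v else atgt n (last as))"

fun pmult :: "nat \<Rightarrow> path \<Rightarrow> path \<Rightarrow> path option" where
  "pmult n (P v as) (P w bs) = (if ptgt n (P v as) = w then Some (P v (as @ bs)) else None)"

definition mkpath :: "nat \<Rightarrow> arr list \<Rightarrow> path" where
  "mkpath n as = P (asrc n (hd as)) as"

definition CQ :: "nat \<Rightarrow> (path \<Rightarrow> complex) set" where
  "CQ n = {f. finite {p. f p \<noteq> 0} \<and> (\<forall>p. f p \<noteq> 0 \<longrightarrow> valid_path n p)}"

definition pmul :: "nat \<Rightarrow> (path \<Rightarrow> complex) \<Rightarrow> (path \<Rightarrow> complex) \<Rightarrow> (path \<Rightarrow> complex)" where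
  "pmul n f g = (\<lambda>r. \<Sum>(p, q) \<in> {(p, q). pmult n p q = Some r}. f p * g q)"

definition basis :: "path \<Rightarrow> (path \<Rightarrow> complex)" where
  "basis p = (\<lambda>r. if r = p then 1 else 0)"

text \<open>z_{2k} as a list of arrows, for k in [1,n].\<close>
definition zpath :: "nat \<Rightarrow> nat \<Rightarrow> arr list" where
  "zpath n k = (if k = 1 then map Al [0..<n - 2]
               else if k = 2 then [Y4]
               else if k = n then [Y2n]
               else [Ga (k - 2), Be (k - 3)])"

text \<open>z_{2j} with j taken modulo n (representatives in [1,n]).\<close>
definition zz :: "nat \<Rightarrow> nat \<Rightarrow> arr list" where
  "zz n j = zpath n ((j + n - 1) mod n + 1)"

text \<open>The faces of Q_F(n), as cyclic words of arrows: the n faces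
  x_{2j-1} x_{2j} z_{2j} at the boundary and the n-2 triangles, one per triangle of the fan.\<close>
definition faces :: "nat \<Rightarrow> arr list list" where
  "faces n = map (\<lambda>j. [X (2*j - 1), X (2*j)] @ zpath n j) [1..<n + 1]
     @ [[Y4, Al 0, Be 0]]
     @ map (\<lambda>k. [Al (k - 1), Be (k - 1), Ga (k - 1)]) [2..<n - 2]
     @ [[Al (n - 3), Y2n, Ga (n - 3)]]"

text \<open>The relations p = q of \<partial>W: for an internal arrow a lying on two distinct faces
  a p and a q (up to cyclic rotation).\<close>
definition dW_rel :: "nat \<Rightarrow> arr list \<Rightarrow> arr list \<Rightarrow> bool" where
  "dW_rel n p q = (\<exists>a F1 F2 i j. internal_arr a \<and> F1 \<in> set (faces n) \<and> F2 \<in> set (faces n)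
      \<and> F1 \<noteq> F2 \<and> rotate i F1 = a # p \<and> rotate j F2 = a # q)"

inductive_set dW_ideal :: "nat \<Rightarrow> (path \<Rightarrow> complex) set" for n where
  gen: "dW_rel n p q \<Longrightarrow> (\<lambda>r. basis (mkpath n p) r - basis (mkpath n q) r) \<in> dW_ideal n"
| zero: "(\<lambda>r. 0) \<in> dW_ideal n"
| add: "f \<in> dW_ideal n \<Longrightarrow> g \<in> dW_ideal n \<Longrightarrow> (\<lambda>r. f r + g r) \<in> dW_ideal n"
| smult: "f \<in> dW_ideal n \<Longrightarrow> (\<lambda>r. c * f r) \<in> dW_ideal n"
| lmult: "f \<in> dW_ideal n \<Longrightarrow> g \<in> CQ n \<Longrightarrow> pmul n g f \<in> dW_ideal n"
| rmult: "f \<in> dW_ideal n \<Longrightarrow> g \<in> CQ n \<Longrightarrow> pmul n f g \<in> dW_ideal n"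

text \<open>Equality in the dimer algebra \<Lambda> = CQ / \<langle>\<partial>W\<rangle>.\<close>
definition lam_eq :: "nat \<Rightarrow> (path \<Rightarrow> complex) \<Rightarrow> (path \<Rightarrow> complex) \<Rightarrow> bool" where
  "lam_eq n f g = ((\<lambda>r. f r - g r) \<in> dW_ideal n)"

definition pel :: "nat \<Rightarrow> arr list \<Rightarrow> (path \<Rightarrow> complex)" where
  "pel n as = basis (mkpath n as)"

text \<open>x_j with j taken modulo 2n.\<close>
definition xx :: "nat \<Rightarrow> nat \<Rightarrow> arr" where
  "xx n j = X (bix n j)"

end

theory Submission imports Defs begin

text \<open>Each relation of \<partial>W trades the arrows of one face through an internal arrow for the
  complementary arrows of the other face through it. Relation (II) is two such moves across a
  single triangle of the fan. For (I), induction along the fan gives the chains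
  gamma_a alpha_a ... alpha_{n-3} = x_{2a+5} ... x_{2n} and
  alpha_0 ... alpha_m beta_m = x_3 ... x_{2m+4}, and one more move turns each product
  z_{2k} z_{2k-2} into such chains.\<close>

definition relation_I :: "nat \<Rightarrow> nat \<Rightarrow> bool" where
  "relation_I n k = lam_eq n (pel n (zz n k @ zz n (k - 1)))
                           (pel n (map (xx n) [2*k + 1..<2*k + 2*(n - 2) + 1]))"

definition relation_II :: "nat \<Rightarrow> nat \<Rightarrow> bool" where
  "relation_II n k = lam_eq n (pel n ([xx n (2*k + 1), xx n (2*k + 2)] @ zz n (k + 1)))
                            (pel n (zz n k @ [xx n (2*k - 1), xx n (2*k)]))"

definition walk :: "nat \<Rightarrow> arr list \<Rightarrow> bool" where
  "walk n as = ((\<forall>a\<in>set as. valid_arr n a) \<and> composable n as)"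

lemma composable_Cons:
  "composable n (a # as) = ((as \<noteq> [] \<longrightarrow> atgt n a = asrc n (hd as)) \<and> composable n as)"
  by (cases as) auto

lemma composable_append:
  "composable n (as @ bs) = (composable n as \<and> composable n bs
     \<and> (as \<noteq> [] \<longrightarrow> bs \<noteq> [] \<longrightarrow> atgt n (last as) = asrc n (hd bs)))"
  by (induction as) (auto simp: composable_Cons)

lemma walk_Nil [simp]: "walk n []"
  by (simp add: walk_def)

lemma walk_Cons:
  "walk n (a # as) = (valid_arr n a \<and> walk n as \<and> (as \<noteq> [] \<longrightarrow> atgt n a = asrc n (hd as)))"
  unfolding walk_def composable_Cons by auto

lemma walk_append:
  "walk n (as @ bs) = (walk n as \<and> walk n bs
     \<and> (as \<noteq> [] \<longrightarrow> bs \<noteq> [] \<longrightarrow> atgt n (last as) = asrc n (hd bs)))"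
  unfolding walk_def composable_append by auto

lemma upt_append_split: "a \<le> b \<Longrightarrow> b \<le> c \<Longrightarrow> [a..<c] = [a..<b] @ [b..<c]"
  using upt_add_eq_append[of a b "c - b"] by simp

lemma map_upt_1: "3 \<le> b \<Longrightarrow> map f [1..<b] = [f 1, f 2] @ map f [3..<b]"
  using upt_append_split[of 1 3 b] by (simp add: numeral_2_eq_2 numeral_3_eq_3)

lemma bix_id: "1 \<le> j \<Longrightarrow> j \<le> 2*n \<Longrightarrow> bix n j = j"
  unfolding bix_def
proof -
  assume j: "1 \<le> j" "j \<le> 2*n"
  then have "j + 2*n - 1 = (j - 1) + 2*n" by simp
  then have "(j + 2*n - 1) mod (2*n) = (j - 1) mod (2*n)" by (simp only: mod_add_self2)
  then show "(j + 2*n - 1) mod (2*n) + 1 = j" using j by simp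
qed

lemma bix_wrap: "2*n < j \<Longrightarrow> j \<le> 4*n \<Longrightarrow> bix n j = j - 2*n"
  unfolding bix_def
proof -
  assume j: "2*n < j" "j \<le> 4*n"
  then have "j + 2*n - 1 = (j - 2*n - 1) + 2*n + 2*n" by simp
  then have "(j + 2*n - 1) mod (2*n) = (j - 2*n - 1) mod (2*n)" by (simp only: mod_add_self2)
  then show "(j + 2*n - 1) mod (2*n) + 1 = j - 2*n" using j by simp
qed

lemma walk_X_upt: "1 \<le> a \<Longrightarrow> b \<le> 2*n + 1 \<Longrightarrow> walk n (map X [a..<b])"
proof (induction b)
  case (Suc b)
  show ?case
  proof (cases "a \<le> b")
    case True
    have "a < b \<Longrightarrow> bix n (b - 1) = b - 1" using Suc True by (intro bix_id) auto
    then show ?thesis using Suc True by (auto simp: walk_append walk_Cons last_map)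
  qed simp
qed simp

lemma walk_Al_upt: "b + 2 \<le> n \<Longrightarrow> walk n (map Al [a..<b])"
  by (induction b) (auto simp: walk_append walk_Cons last_map)

lemma finite_factorizations: "finite {(p, q). pmult n p q = Some r}"
proof -
  obtain v cs where r: "r = P v cs" by (cases r)
  have "{(p, q). pmult n p q = Some r} \<subseteq>
     (\<lambda>i. (P v (take i cs), P (ptgt n (P v (take i cs))) (drop i cs))) ` {..length cs}"
  proof
    fix x assume "x \<in> {(p, q). pmult n p q = Some r}"
    then obtain p q where x: "x = (p, q)" and pq: "pmult n p q = Some r" by auto
    obtain v' as where p: "p = P v' as" by (cases p)
    obtain w bs where q: "q = P w bs" by (cases q)
    from pq have "ptgt n (P v' as) = w" "v' = v" "as @ bs = cs"
      by (auto simp: p q r split: if_splits)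
    then show "x \<in> (\<lambda>i. (P v (take i cs), P (ptgt n (P v (take i cs))) (drop i cs)))
                   ` {..length cs}"
      by (intro image_eqI[of _ _ "length as"]) (auto simp: x p q)
  qed
  then show ?thesis by (rule finite_subset) simp
qed

lemma pmul_basis: "pmult n a b = Some c \<Longrightarrow> pmul n (basis a) (basis b) = basis c"
proof
  fix r assume ab: "pmult n a b = Some c"
  have "pmul n (basis a) (basis b) r
      = (\<Sum>x\<in>{(p, q). pmult n p q = Some r}. if x = (a, b) then 1 else 0)"
    unfolding pmul_def by (rule sum.cong) (auto simp: basis_def split: if_splits)
  also have "\<dots> = (if (a, b) \<in> {(p, q). pmult n p q = Some r} then 1 else 0)"
    using finite_factorizations by (rule sum.delta)
  also have "\<dots> = basis c r" using ab by (auto simp: basis_def)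
  finally show "pmul n (basis a) (basis b) r = basis c r" .
qed

lemma pmul_diff_right: "pmul n g (\<lambda>r. f1 r - f2 r) = (\<lambda>r. pmul n g f1 r - pmul n g f2 r)"
  unfolding pmul_def by (auto simp: split_def right_diff_distrib sum_subtractf)

lemma pmul_diff_left: "pmul n (\<lambda>r. f1 r - f2 r) g = (\<lambda>r. pmul n f1 g r - pmul n f2 g r)"
  unfolding pmul_def by (auto simp: split_def left_diff_distrib sum_subtractf)

lemma basis_in_CQ: "valid_path n p \<Longrightarrow> basis p \<in> CQ n"
  unfolding CQ_def basis_def by (auto simp: finite_subset[of _ "{p}"])

lemma lam_eq_sym: "lam_eq n f g \<Longrightarrow> lam_eq n g f"
  unfolding lam_eq_def
proof -
  assume "(\<lambda>r. f r - g r) \<in> dW_ideal n"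
  then have "(\<lambda>r. (-1) * (f r - g r)) \<in> dW_ideal n" by (rule dW_ideal.smult)
  then show "(\<lambda>r. g r - f r) \<in> dW_ideal n" by simp
qed

lemma lam_eq_trans: "lam_eq n f g \<Longrightarrow> lam_eq n g h \<Longrightarrow> lam_eq n f h"
  unfolding lam_eq_def
proof -
  assume "(\<lambda>r. f r - g r) \<in> dW_ideal n" "(\<lambda>r. g r - h r) \<in> dW_ideal n"
  then have "(\<lambda>r. (f r - g r) + (g r - h r)) \<in> dW_ideal n" by (rule dW_ideal.add)
  then show "(\<lambda>r. f r - h r) \<in> dW_ideal n" by simp
qed

context
  fixes n :: nat
  assumes four_le_n: "4 \<le> n"
begin

lemma bix_bounds: "1 \<le> bix n j \<and> bix n j \<le> 2*n"
proof -
  have "(j + 2*n - 1) mod (2*n) < 2*n" using four_le_n by simp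
  then show ?thesis unfolding bix_def by simp
qed

lemma bix_0: "bix n 0 = 2*n"
  using four_le_n unfolding bix_def by simp

lemma valid_vert_asrc: "valid_arr n a \<Longrightarrow> valid_vert n (asrc n a)"
  using four_le_n bix_bounds by (cases a) auto

lemma pel_in_CQ: "as \<noteq> [] \<Longrightarrow> walk n as \<Longrightarrow> pel n as \<in> CQ n"
  unfolding pel_def mkpath_def by (rule basis_in_CQ) (auto simp: walk_def valid_vert_asrc)

lemma lam_eq_append_right:
  assumes "lam_eq n (pel n p) (pel n q)" "p \<noteq> []" "q \<noteq> []" "v \<noteq> []" "walk n v"
    "atgt n (last p) = asrc n (hd v)" "atgt n (last q) = asrc n (hd v)"
  shows "lam_eq n (pel n (p @ v)) (pel n (q @ v))"
proof -
  have "pmul n (\<lambda>r. pel n p r - pel n q r) (pel n v) \<in> dW_ideal n"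
    using assms(1) pel_in_CQ[OF assms(4,5)] unfolding lam_eq_def by (rule dW_ideal.rmult)
  moreover have "pmul n (pel n p) (pel n v) = pel n (p @ v)"
    unfolding pel_def mkpath_def using assms by (intro pmul_basis) simp
  moreover have "pmul n (pel n q) (pel n v) = pel n (q @ v)"
    unfolding pel_def mkpath_def using assms by (intro pmul_basis) simp
  ultimately show ?thesis unfolding lam_eq_def pmul_diff_left by simp
qed

lemma lam_eq_append_left:
  assumes "lam_eq n (pel n p) (pel n q)" "p \<noteq> []" "q \<noteq> []" "u \<noteq> []" "walk n u"
    "atgt n (last u) = asrc n (hd p)" "atgt n (last u) = asrc n (hd q)"
  shows "lam_eq n (pel n (u @ p)) (pel n (u @ q))"
proof -
  have "pmul n (pel n u) (\<lambda>r. pel n p r - pel n q r) \<in> dW_ideal n"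
    using assms(1) pel_in_CQ[OF assms(4,5)] unfolding lam_eq_def by (rule dW_ideal.lmult)
  moreover have "pmul n (pel n u) (pel n p) = pel n (u @ p)"
    unfolding pel_def mkpath_def using assms by (intro pmul_basis) simp
  moreover have "pmul n (pel n u) (pel n q) = pel n (u @ q)"
    unfolding pel_def mkpath_def using assms by (intro pmul_basis) simp
  ultimately show ?thesis unfolding lam_eq_def pmul_diff_right by simp
qed

section \<open>Equality of parallel paths in the dimer algebra\<close>

text \<open>The walk and endpoint conditions are what allow a relation to be multiplied by a walk on
  either side, so that \<open>path_eq\<close> is a congruence for concatenation.\<close>

definition path_eq :: "arr list \<Rightarrow> arr list \<Rightarrow> bool" where
  "path_eq p q = (p \<noteq> [] \<and> q \<noteq> [] \<and> walk n p \<and> walk n q \<and> asrc n (hd p) = asrc n (hd q)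
     \<and> atgt n (last p) = atgt n (last q) \<and> lam_eq n (pel n p) (pel n q))"

lemma path_eq_sym: "path_eq p q \<Longrightarrow> path_eq q p"
  unfolding path_eq_def using lam_eq_sym by metis

lemma path_eq_trans [trans]: "path_eq p q \<Longrightarrow> path_eq q r \<Longrightarrow> path_eq p r"
  unfolding path_eq_def using lam_eq_trans by metis

lemma path_eq_lam_eq: "path_eq p q \<Longrightarrow> lam_eq n (pel n p) (pel n q)"
  unfolding path_eq_def by simp

lemma path_eq_append:
  assumes "path_eq p q" "walk n (u @ p @ v)"
  shows "path_eq (u @ p @ v) (u @ q @ v)"
proof -
  have pq: "p \<noteq> []" "q \<noteq> []" "walk n p" "walk n q" "asrc n (hd p) = asrc n (hd q)"
     "atgt n (last p) = atgt n (last q)" "lam_eq n (pel n p) (pel n q)"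
    using assms(1) unfolding path_eq_def by auto
  have uv: "walk n u" "walk n v" "u \<noteq> [] \<longrightarrow> atgt n (last u) = asrc n (hd p)"
     "v \<noteq> [] \<longrightarrow> atgt n (last p) = asrc n (hd v)"
    using assms(2) pq(1) by (auto simp: walk_append)
  have "lam_eq n (pel n (p @ v)) (pel n (q @ v))"
    using pq uv by (cases "v = []") (auto intro: lam_eq_append_right)
  then have "lam_eq n (pel n (u @ p @ v)) (pel n (u @ q @ v))"
    using pq uv by (cases "u = []") (auto intro!: lam_eq_append_left)
  moreover have "walk n (u @ q @ v)" using uv pq by (auto simp: walk_append)
  ultimately show ?thesis
    unfolding path_eq_def using pq assms(2) by (auto simp: hd_append last_append)
qed

lemma path_eq_in_context:
  "path_eq p q \<Longrightarrow> A = u @ p @ v \<Longrightarrow> B = u @ q @ v \<Longrightarrow> walk n A \<Longrightarrow> path_eq A B"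
  using path_eq_append by blast

lemma path_eq_of_dW_rel:
  "dW_rel n p q \<Longrightarrow> p \<noteq> [] \<Longrightarrow> q \<noteq> [] \<Longrightarrow> walk n p \<Longrightarrow> walk n q \<Longrightarrow>
   asrc n (hd p) = asrc n (hd q) \<Longrightarrow> atgt n (last p) = atgt n (last q) \<Longrightarrow> path_eq p q"
  unfolding path_eq_def lam_eq_def pel_def by (auto intro: dW_ideal.gen)

section \<open>The relations of \<partial>W\<close>

lemma dW_relI:
  "internal_arr a \<Longrightarrow> F1 \<in> set (faces n) \<Longrightarrow> F2 \<in> set (faces n) \<Longrightarrow> F1 \<noteq> F2
   \<Longrightarrow> rotate i F1 = a # p \<Longrightarrow> rotate j F2 = a # q \<Longrightarrow> dW_rel n p q"
  unfolding dW_rel_def by blast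

lemma boundary_face: "1 \<le> j \<Longrightarrow> j \<le> n \<Longrightarrow> [X (2*j - 1), X (2*j)] @ zpath n j \<in> set (faces n)"
  unfolding faces_def set_append set_map by (intro UnI1 image_eqI[of _ _ j]) auto

lemma first_triangle: "[Y4, Al 0, Be 0] \<in> set (faces n)"
  unfolding faces_def by auto

lemma middle_triangle: "1 \<le> k \<Longrightarrow> k + 4 \<le> n \<Longrightarrow> [Al k, Be k, Ga k] \<in> set (faces n)"
  unfolding faces_def by (auto intro!: image_eqI[of _ _ "k + 1"])

lemma last_triangle: "[Al (n - 3), Y2n, Ga (n - 3)] \<in> set (faces n)"
  unfolding faces_def by auto

lemma first_boundary_face: "[X 1, X 2] @ zpath n 1 \<in> set (faces n)"
  using boundary_face[of 1] four_le_n by simp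

lemma rotate_first_boundary_face:
  assumes "k \<le> n - 3"
  shows "rotate (k + 2) ([X 1, X 2] @ zpath n 1)
           = Al k # (map Al [k + 1..<n - 2] @ [X 1, X 2] @ map Al [0..<k])"
proof -
  have "[0..<n - 2] = [0..<k] @ k # [k + 1..<n - 2]"
    using assms four_le_n upt_append_split[of 0 k "n - 2"] by (simp add: upt_conv_Cons)
  then have "[X 1, X 2] @ zpath n 1 = ([X 1, X 2] @ map Al [0..<k]) @ Al k # map Al [k + 1..<n - 2]"
    by (simp add: zpath_def)
  then show ?thesis using rotate_append[of "[X 1, X 2] @ map Al [0..<k]"] by simp
qed

lemma walk_around_first_boundary_face:
  "k \<le> n - 3 \<Longrightarrow> walk n (map Al [k + 1..<n - 2] @ [X 1, X 2] @ map Al [0..<k])"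
  using four_le_n walk_Al_upt[where b="n - 2" and a="k + 1" and n=n]
    walk_Al_upt[where b=k and a=0 and n=n]
  by (auto simp: walk_append walk_Cons bix_def last_map hd_map)

lemma rel_y4: "path_eq [X 3, X 4] [Al 0, Be 0]"
proof -
  have F: "[X 3, X 4] @ [Y4] \<in> set (faces n)"
    using boundary_face[of 2] four_le_n by (simp add: zpath_def)
  have "dW_rel n [X 3, X 4] [Al 0, Be 0]"
    by (rule dW_relI[OF _ F first_triangle, where a=Y4 and i=2 and j=0])
       (auto simp: numeral_eq_Suc)
  then show ?thesis using four_le_n by (intro path_eq_of_dW_rel) (auto simp: walk_Cons bix_id)
qed

lemma rel_y2n: "path_eq [X (2*n - 1), X (2*n)] [Ga (n - 3), Al (n - 3)]"
proof -
  have F: "[X (2*n - 1), X (2*n)] @ [Y2n] \<in> set (faces n)"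
    using boundary_face[of n] four_le_n by (simp add: zpath_def)
  have "dW_rel n [X (2*n - 1), X (2*n)] [Ga (n - 3), Al (n - 3)]"
    by (rule dW_relI[OF _ F last_triangle, where a=Y2n and i=2 and j=1])
       (auto simp: numeral_eq_Suc)
  then show ?thesis using four_le_n by (intro path_eq_of_dW_rel) (auto simp: walk_Cons bix_id)
qed

lemma rel_alpha_first: "path_eq (map Al [1..<n - 2] @ [X 1, X 2]) [Be 0, Y4]"
proof -
  have "dW_rel n (map Al [0 + 1..<n - 2] @ [X 1, X 2] @ map Al [0..<0]) [Be 0, Y4]"
    by (rule dW_relI[OF _ first_boundary_face first_triangle, where a="Al 0" and i=2 and j=1])
       (use rotate_first_boundary_face[of 0] four_le_n in \<open>auto simp: numeral_eq_Suc faces_def\<close>)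
  then show ?thesis using four_le_n walk_around_first_boundary_face[of 0]
    by (intro path_eq_of_dW_rel) (auto simp: walk_Cons hd_map)
qed

lemma rel_alpha:
  assumes k: "1 \<le> k" "k + 4 \<le> n"
  shows "path_eq (map Al [k + 1..<n - 2] @ [X 1, X 2] @ map Al [0..<k]) [Be k, Ga k]"
proof -
  have "dW_rel n (map Al [k + 1..<n - 2] @ [X 1, X 2] @ map Al [0..<k]) [Be k, Ga k]"
    by (rule dW_relI[OF _ first_boundary_face middle_triangle[OF k],
          where a="Al k" and i="k + 2" and j=0])
       (use rotate_first_boundary_face[of k] k in \<open>auto simp: zpath_def\<close>)
  then show ?thesis using k walk_around_first_boundary_face[of k]
    by (intro path_eq_of_dW_rel) (auto simp: walk_Cons hd_map last_map)
qed

lemma rel_alpha_last: "path_eq ([X 1, X 2] @ map Al [0..<n - 3]) [Y2n, Ga (n - 3)]"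
proof -
  have "dW_rel n (map Al [n - 3 + 1..<n - 2] @ [X 1, X 2] @ map Al [0..<n - 3]) [Y2n, Ga (n - 3)]"
    by (rule dW_relI[OF _ first_boundary_face last_triangle,
          where a="Al (n - 3)" and i="n - 3 + 2" and j=0])
       (use rotate_first_boundary_face[of "n - 3"] four_le_n in \<open>auto simp: zpath_def\<close>)
  moreover have "n - 3 + 1 = n - 2" using four_le_n by simp
  ultimately have "dW_rel n ([X 1, X 2] @ map Al [0..<n - 3]) [Y2n, Ga (n - 3)]" by simp
  then show ?thesis using four_le_n walk_around_first_boundary_face[of "n - 3"]
    by (intro path_eq_of_dW_rel) (auto simp: walk_Cons hd_map last_map bix_def)
qed

lemma rel_beta_first: "path_eq [X 5, X 6, Ga 1] [Y4, Al 0]"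
proof -
  have F: "[X 5, X 6, Ga 1, Be 0] \<in> set (faces n)"
    using boundary_face[of 3] four_le_n by (simp add: zpath_def)
  have "dW_rel n [X 5, X 6, Ga 1] [Y4, Al 0]"
    by (rule dW_relI[OF _ F first_triangle, where a="Be 0" and i=3 and j=2])
       (auto simp: numeral_eq_Suc)
  then show ?thesis using four_le_n by (intro path_eq_of_dW_rel) (auto simp: walk_Cons bix_id)
qed

lemma rel_beta:
  assumes j: "1 \<le> j" "j + 4 \<le> n"
  shows "path_eq [X (2*j + 5), X (2*j + 6), Ga (j + 1)] [Ga j, Al j]"
proof -
  have e: "[X (2*(j + 3) - 1), X (2*(j + 3))] @ zpath n (j + 3)
      = [X (2*j + 5), X (2*j + 6), Ga (j + 1), Be j]"
    using j by (simp add: zpath_def)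
  have F: "[X (2*j + 5), X (2*j + 6), Ga (j + 1), Be j] \<in> set (faces n)"
    using boundary_face[of "j + 3", unfolded e] j by simp
  have "dW_rel n [X (2*j + 5), X (2*j + 6), Ga (j + 1)] [Ga j, Al j]"
    by (rule dW_relI[OF _ F middle_triangle[OF j], where a="Be j" and i=3 and j=1])
       (auto simp: numeral_eq_Suc)
  then show ?thesis using j by (intro path_eq_of_dW_rel) (auto simp: walk_Cons bix_id)
qed

lemma rel_gamma:
  assumes k: "1 \<le> k" "k + 4 \<le> n"
  shows "path_eq [Be (k - 1), X (2*k + 3), X (2*k + 4)] [Al k, Be k]"
proof -
  have e: "[X (2*(k + 2) - 1), X (2*(k + 2))] @ zpath n (k + 2)
      = [X (2*k + 3), X (2*k + 4), Ga k, Be (k - 1)]"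
    using k by (simp add: zpath_def)
  have F: "[X (2*k + 3), X (2*k + 4), Ga k, Be (k - 1)] \<in> set (faces n)"
    using boundary_face[of "k + 2", unfolded e] k by simp
  have "dW_rel n [Be (k - 1), X (2*k + 3), X (2*k + 4)] [Al k, Be k]"
    by (rule dW_relI[OF _ F middle_triangle[OF k], where a="Ga k" and i=2 and j=2])
       (auto simp: numeral_eq_Suc)
  then show ?thesis using k by (intro path_eq_of_dW_rel) (auto simp: walk_Cons bix_id)
qed

lemma rel_gamma_last: "path_eq [Be (n - 4), X (2*n - 3), X (2*n - 2)] [Al (n - 3), Y2n]"
proof -
  have e: "[X (2*(n - 1) - 1), X (2*(n - 1))] @ zpath n (n - 1)
      = [X (2*n - 3), X (2*n - 2), Ga (n - 3), Be (n - 4)]"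
    using four_le_n by (simp add: zpath_def, arith)
  have F: "[X (2*n - 3), X (2*n - 2), Ga (n - 3), Be (n - 4)] \<in> set (faces n)"
    using boundary_face[of "n - 1", unfolded e] four_le_n by simp
  have "dW_rel n [Be (n - 4), X (2*n - 3), X (2*n - 2)] [Al (n - 3), Y2n]"
    by (rule dW_relI[OF _ F last_triangle, where a="Ga (n - 3)" and i=2 and j=2])
       (auto simp: numeral_eq_Suc)
  then show ?thesis using four_le_n by (intro path_eq_of_dW_rel) (auto simp: walk_Cons bix_id)
qed

section \<open>Chains along the fan\<close>

lemma hd_Al_upt_append: "hd (map Al [0..<m] @ Al m # r) = Al 0"
  by (cases m) (simp_all add: hd_map upt_conv_Cons del: upt_Suc)

lemmas walk_simps = walk_append walk_Cons hd_map last_map bix_id walk_Al_upt walk_X_upt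
  bix_0 hd_Al_upt_append

lemma gamma_alphas_eq_xs:
  "1 \<le> a \<Longrightarrow> a + 3 \<le> n \<Longrightarrow> path_eq (Ga a # map Al [a..<n - 2]) (map X [2*a + 5..<2*n + 1])"
proof (induction "n - 3 - a" arbitrary: a)
  case 0
  then have a: "a = n - 3" by simp
  have "[a..<n - 2] = [n - 3]" using a four_le_n by (simp add: upt_conv_Cons)
  moreover have "2*a + 5 = 2*n - 1" "2*n + 1 = Suc (Suc (2*n - 1))" using a four_le_n by auto
  then have "[2*a + 5..<2*n + 1] = [2*n - 1, 2*n]" using four_le_n by (simp add: upt_conv_Cons)
  ultimately show ?case using path_eq_sym[OF rel_y2n] a by simp
next
  case (Suc d)
  have a: "1 \<le> a" "a + 4 \<le> n" using Suc by auto
  have "path_eq (Ga a # map Al [a..<n - 2])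
      ([X (2*a + 5), X (2*a + 6), Ga (a + 1)] @ map Al [a + 1..<n - 2])"
    by (rule path_eq_in_context[OF path_eq_sym[OF rel_beta[OF a]], where u="[]"])
       (use a walk_Al_upt[where n=n and a="a + 1" and b="n - 2"] in
         \<open>auto simp: upt_conv_Cons walk_Cons hd_map\<close>)
  also have "path_eq \<dots> ([X (2*a + 5), X (2*a + 6)] @ map X [2*(a + 1) + 5..<2*n + 1])"
    by (rule path_eq_in_context[OF Suc.hyps(1)[of "a + 1"], where v="[]"])
       (use a Suc.hyps(2) walk_Al_upt[where n=n and a="a + 1" and b="n - 2"] in
         \<open>auto simp: upt_conv_Cons walk_Cons hd_map bix_id\<close>)
  also have "[X (2*a + 5), X (2*a + 6)] @ map X [2*(a + 1) + 5..<2*n + 1]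
      = map X [2*a + 5..<2*n + 1]"
    using a by (simp add: upt_conv_Cons)
  finally show ?case .
qed

lemma alphas_beta_eq_xs:
  "m + 4 \<le> n \<Longrightarrow> path_eq (map Al [0..<m + 1] @ [Be m]) (map X [3..<2*m + 5])"
proof (induction m)
  case 0
  then show ?case using path_eq_sym[OF rel_y4] by (simp add: upt_conv_Cons)
next
  case (Suc m)
  have k: "1 \<le> m + 1" "m + 1 + 4 \<le> n" using Suc by auto
  have "map Al [0..<Suc m + 1] @ [Be (Suc m)] = map Al [0..<m + 1] @ [Al (m + 1), Be (m + 1)]"
    by simp
  also have "path_eq \<dots> (map Al [0..<m + 1] @ [Be m, X (2*m + 5), X (2*m + 6)])"
    by (rule path_eq_in_context[OF path_eq_sym[OF rel_gamma[OF k]], where v="[]"])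
       (use k walk_Al_upt[where n=n and a=0 and b="m + 1"] in
         \<open>auto simp: walk_Cons walk_append last_map\<close>)
  also have "\<dots> = (map Al [0..<m + 1] @ [Be m]) @ [X (2*m + 5), X (2*m + 6)]"
    by simp
  also have "path_eq \<dots> (map X [3..<2*m + 5] @ [X (2*m + 5), X (2*m + 6)])"
    by (rule path_eq_in_context[OF Suc.IH, where u="[]"])
       (use k walk_Al_upt[where n=n and a=0 and b="m + 1"] in
         \<open>auto simp: walk_Cons walk_append last_map bix_id\<close>)
  also have "map X [3..<2*m + 5] @ [X (2*m + 5), X (2*m + 6)] = map X [3..<2*Suc m + 5]"
    using upt_append_split[of 3 "2*m + 5" "2*m + 7"] by (simp add: upt_conv_Cons add.commute)
  finally show ?case .
qed

lemma xx_eq_X: "1 \<le> a \<Longrightarrow> b \<le> 2*n + 1 \<Longrightarrow> map (xx n) [a..<b] = map X [a..<b]"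
  by (auto simp: xx_def bix_id)

lemma xx_eq_X_wrap:
  assumes "2*n + 1 \<le> a" "b \<le> 4*n + 1"
  shows "map (xx n) [a..<b] = map X [a - 2*n..<b - 2*n]"
proof (rule nth_equalityI)
  show "length (map (xx n) [a..<b]) = length (map X [a - 2*n..<b - 2*n])" using assms by simp
next
  fix i assume "i < length (map (xx n) [a..<b])"
  then show "map (xx n) [a..<b] ! i = map X [a - 2*n..<b - 2*n] ! i"
    using assms by (simp add: xx_def bix_wrap)
qed

lemma zz_eq_zpath: "1 \<le> k \<Longrightarrow> k \<le> n \<Longrightarrow> zz n k = zpath n k"
proof -
  assume k: "1 \<le> k" "k \<le> n"
  then have "k + n - 1 = (k - 1) + n" by simp
  then have "(k + n - 1) mod n = (k - 1) mod n" by (simp only: mod_add_self2)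
  then show ?thesis using k by (simp add: zz_def)
qed

lemma zz_0: "zz n 0 = zpath n n"
  using four_le_n by (simp add: zz_def)

lemma zz_Suc_n: "zz n (Suc n) = zpath n 1"
  using four_le_n by (simp add: zz_def)

lemma zz_interior: "3 \<le> k \<Longrightarrow> k + 1 \<le> n \<Longrightarrow> zz n k = [Ga (k - 2), Be (k - 3)]"
  by (simp add: zz_eq_zpath zpath_def)

lemma zz_n: "zz n n = [Y2n]"
  using four_le_n by (simp add: zz_eq_zpath zpath_def)

lemma zz_pred_n: "zz n (n - 1) = [Ga (n - 3), Be (n - 4)]"
proof -
  have "3 \<le> n - 1" "n - 1 + 1 \<le> n" using four_le_n by auto
  moreover have "n - 1 - 2 = n - 3" "n - 1 - 3 = n - 4" by auto
  ultimately show ?thesis using zz_interior[of "n - 1"] by metis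
qed

lemma relation_I_1: "relation_I n 1"
proof -
  have zs: "zz n 1 @ zz n (1 - 1) = map Al [0..<n - 2] @ [Y2n]"
    using four_le_n by (simp add: zz_0 zz_eq_zpath zpath_def)
  have "2*1 + 1 = (3::nat)" "2*1 + 2*(n - 2) + 1 = 2*n - 1" using four_le_n by auto
  then have xs: "map (xx n) [2*1 + 1..<2*1 + 2*(n - 2) + 1] = map X [3..<2*n - 1]"
    using four_le_n xx_eq_X[of 3 "2*n - 1"] by simp
  have "[0..<n - 2] = [0..<n - 3] @ [n - 3]"
    using four_le_n upt_append_split[of 0 "n - 3" "n - 2"] by (simp add: upt_conv_Cons)
  then have "path_eq (map Al [0..<n - 2] @ [Y2n])
      (map Al [0..<n - 3] @ [Be (n - 4), X (2*n - 3), X (2*n - 2)])"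
    by (intro path_eq_in_context[OF path_eq_sym[OF rel_gamma_last], where v="[]"])
       (use four_le_n in \<open>auto simp: walk_simps\<close>)
  also have "path_eq \<dots> (map X [3..<2*(n - 4) + 5] @ [X (2*n - 3), X (2*n - 2)])"
    by (rule path_eq_in_context[OF alphas_beta_eq_xs[of "n - 4"], where u="[]"])
       (use four_le_n upt_Suc[of 0 "n - 4"] in \<open>auto simp: walk_simps Suc_diff_Suc numeral_eq_Suc\<close>)
  also have "map X [3..<2*(n - 4) + 5] @ [X (2*n - 3), X (2*n - 2)] = map X [3..<2*n - 1]"
  proof -
    have "[3..<2*n - 1] = [3..<2*(n - 4) + 5] @ [2*(n - 4) + 5..<2*n - 1]"
      using four_le_n upt_append_split[of 3 "2*(n - 4) + 5" "2*n - 1"] by simp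
    moreover have "[2*(n - 4) + 5..<2*n - 1] = [2*n - 3, 2*n - 2]"
      using four_le_n by (simp add: upt_conv_Cons, arith)
    ultimately show ?thesis by simp
  qed
  finally show ?thesis unfolding relation_I_def zs xs by (rule path_eq_lam_eq)
qed

lemma relation_I_2: "relation_I n 2"
proof -
  have zs: "zz n 2 @ zz n (2 - 1) = [Y4] @ map Al [0..<n - 2]"
    using four_le_n by (simp add: zz_eq_zpath zpath_def)
  have "2*2 + 1 = (5::nat)" "2*2 + 2*(n - 2) + 1 = 2*n + 1" using four_le_n by auto
  then have xs: "map (xx n) [2*2 + 1..<2*2 + 2*(n - 2) + 1] = map X [5..<2*n + 1]"
    using xx_eq_X[of 5 "2*n + 1"] by simp
  have "[0..<n - 2] = 0 # [1..<n - 2]" using four_le_n by (simp add: upt_conv_Cons)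
  then have "path_eq ([Y4] @ map Al [0..<n - 2]) ([X 5, X 6, Ga 1] @ map Al [1..<n - 2])"
    by (intro path_eq_in_context[OF path_eq_sym[OF rel_beta_first], where u="[]"])
       (use four_le_n in \<open>auto simp: walk_simps\<close>)
  also have "path_eq \<dots> ([X 5, X 6] @ map X [2*1 + 5..<2*n + 1])"
    by (rule path_eq_in_context[OF gamma_alphas_eq_xs[of 1], where v="[]"])
       (use four_le_n in \<open>auto simp: walk_simps\<close>)
  also have "[X 5, X 6] @ map X [2*1 + 5..<2*n + 1] = map X [5..<2*n + 1]"
    using four_le_n by (simp add: upt_conv_Cons)
  finally show ?thesis unfolding relation_I_def zs xs by (rule path_eq_lam_eq)
qed

lemma relation_I_3: "relation_I n 3"
proof -
  have zs: "zz n 3 @ zz n (3 - 1) = [Ga 1, Be 0, Y4]"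
    using four_le_n by (simp add: zz_eq_zpath zpath_def)
  have b: "2*3 + 1 = (7::nat)" "2*3 + 2*(n - 2) + 1 = 2*n + 3" using four_le_n by auto
  have "[2*3 + 1..<2*3 + 2*(n - 2) + 1] = [7..<2*n + 1] @ [2*n + 1..<2*n + 3]"
    unfolding b using four_le_n by (intro upt_append_split) auto
  moreover have "map (xx n) [2*n + 1..<2*n + 3] = [X 1, X 2]"
    using xx_eq_X_wrap[of "2*n + 1" "2*n + 3"] four_le_n by (simp add: upt_conv_Cons)
  ultimately have xs:
      "map (xx n) [2*3 + 1..<2*3 + 2*(n - 2) + 1] = map X [7..<2*n + 1] @ [X 1, X 2]"
    using xx_eq_X[of 7 "2*n + 1"] by simp
  have "path_eq [Ga 1, Be 0, Y4] ([Ga 1] @ map Al [1..<n - 2] @ [X 1, X 2])"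
    by (rule path_eq_in_context[OF path_eq_sym[OF rel_alpha_first], where v="[]"])
       (use four_le_n in \<open>auto simp: walk_simps\<close>)
  also have "path_eq \<dots> (map X [2*1 + 5..<2*n + 1] @ [X 1, X 2])"
    by (rule path_eq_in_context[OF gamma_alphas_eq_xs[of 1], where u="[]"])
       (use four_le_n in \<open>auto simp: walk_simps\<close>)
  finally show ?thesis unfolding relation_I_def zs xs by (simp add: path_eq_lam_eq)
qed

lemma relation_I_interior:
  assumes k: "4 \<le> k" "k + 1 \<le> n"
  shows "relation_I n k"
proof -
  have zs: "zz n k @ zz n (k - 1) = [Ga (k - 2), Be (k - 3), Ga (k - 3), Be (k - 4)]"
    using k zz_interior[of k] zz_interior[of "k - 1"] by (simp add: numeral_eq_Suc)
  have "2*k + 2*(n - 2) + 1 = 2*k + 2*n - 3" using k by auto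
  then have "[2*k + 1..<2*k + 2*(n - 2) + 1] = [2*k + 1..<2*n + 1] @ [2*n + 1..<2*k + 2*n - 3]"
    using k upt_append_split[of "2*k + 1" "2*n + 1" "2*k + 2*n - 3"] by simp
  moreover have "map (xx n) [2*n + 1..<2*k + 2*n - 3] = map X [1..<2*k - 3]"
    using k xx_eq_X_wrap[of "2*n + 1" "2*k + 2*n - 3"] by simp
  ultimately have "map (xx n) [2*k + 1..<2*k + 2*(n - 2) + 1]
      = map X [2*k + 1..<2*n + 1] @ map X [1..<2*k - 3]"
    using k xx_eq_X[of "2*k + 1" "2*n + 1"] by simp
  also have "2*k - 3 = 2*(k - 4) + 5" using k by simp
  also have "map X [1..<2*(k - 4) + 5] = [X 1, X 2] @ map X [3..<2*(k - 4) + 5]"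
    by (rule map_upt_1) simp
  finally have xs: "map (xx n) [2*k + 1..<2*k + 2*(n - 2) + 1]
      = map X [2*k + 1..<2*n + 1] @ [X 1, X 2] @ map X [3..<2*(k - 4) + 5]" .
  have j: "1 \<le> k - 3" "k - 3 + 4 \<le> n" using k by auto
  have "path_eq [Ga (k - 2), Be (k - 3), Ga (k - 3), Be (k - 4)]
      ([Ga (k - 2)] @ (map Al [k - 3 + 1..<n - 2] @ [X 1, X 2] @ map Al [0..<k - 3])
        @ [Be (k - 4)])"
    by (rule path_eq_in_context[OF path_eq_sym[OF rel_alpha[OF j]],
          where u="[Ga (k - 2)]" and v="[Be (k - 4)]"])
       (use k upt_Suc[of 0 "k - 4"] in \<open>auto simp: walk_simps Suc_diff_Suc numeral_eq_Suc\<close>)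
  also have "k - 3 + 1 = k - 2" using k by simp
  also have "path_eq ([Ga (k - 2)] @ (map Al [k - 2..<n - 2] @ [X 1, X 2] @ map Al [0..<k - 3])
        @ [Be (k - 4)])
      (map X [2*(k - 2) + 5..<2*n + 1] @ [X 1, X 2] @ map Al [0..<k - 3] @ [Be (k - 4)])"
    by (rule path_eq_in_context[OF gamma_alphas_eq_xs[of "k - 2"],
          where u="[]" and v="[X 1, X 2] @ map Al [0..<k - 3] @ [Be (k - 4)]"])
       (use k upt_Suc[of 0 "k - 4"] in \<open>auto simp: walk_simps Suc_diff_Suc numeral_eq_Suc\<close>)
  also have "path_eq \<dots> (map X [2*(k - 2) + 5..<2*n + 1] @ [X 1, X 2] @ map X [3..<2*(k - 4) + 5])"
    by (rule path_eq_in_context[OF alphas_beta_eq_xs[of "k - 4"], where v="[]"])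
       (use k upt_Suc[of 0 "k - 4"] in \<open>auto simp: walk_simps Suc_diff_Suc numeral_eq_Suc\<close>)
  also have "2*(k - 2) + 5 = 2*k + 1" using k by simp
  finally show ?thesis unfolding relation_I_def zs xs by (rule path_eq_lam_eq)
qed

lemma relation_I_n: "relation_I n n"
proof -
  have zs: "zz n n @ zz n (n - 1) = [Y2n, Ga (n - 3), Be (n - 4)]"
    unfolding zz_n zz_pred_n by simp
  have b: "2*n + 2*(n - 2) + 1 = 4*n - 3" using four_le_n by simp
  have "map (xx n) [2*n + 1..<2*n + 2*(n - 2) + 1] = map X [2*n + 1 - 2*n..<4*n - 3 - 2*n]"
    unfolding b using four_le_n by (intro xx_eq_X_wrap) auto
  also have "2*n + 1 - 2*n = 1" by simp
  also have "4*n - 3 - 2*n = 2*n - 3" by simp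
  also have "2*n - 3 = 2*(n - 4) + 5" using four_le_n by simp
  also have "map X [1..<2*(n - 4) + 5] = [X 1, X 2] @ map X [3..<2*(n - 4) + 5]"
    by (rule map_upt_1) simp
  finally have xs:
      "map (xx n) [2*n + 1..<2*n + 2*(n - 2) + 1] = [X 1, X 2] @ map X [3..<2*(n - 4) + 5]" .
  have "path_eq [Y2n, Ga (n - 3), Be (n - 4)] (([X 1, X 2] @ map Al [0..<n - 3]) @ [Be (n - 4)])"
    by (rule path_eq_in_context[OF path_eq_sym[OF rel_alpha_last], where u="[]"])
       (use four_le_n upt_Suc[of 0 "n - 4"] in \<open>auto simp: walk_simps Suc_diff_Suc numeral_eq_Suc\<close>)
  also have "path_eq \<dots> ([X 1, X 2] @ map X [3..<2*(n - 4) + 5])"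
    by (rule path_eq_in_context[OF alphas_beta_eq_xs[of "n - 4"], where v="[]"])
       (use four_le_n upt_Suc[of 0 "n - 4"] in \<open>auto simp: walk_simps Suc_diff_Suc numeral_eq_Suc\<close>)
  finally show ?thesis unfolding relation_I_def zs xs by (rule path_eq_lam_eq)
qed

lemma relation_II_1: "relation_II n 1"
proof -
  have "path_eq ([X 3, X 4] @ [Y4]) ([Al 0, Be 0] @ [Y4])"
    by (rule path_eq_in_context[OF rel_y4, where u="[]"]) (use four_le_n in \<open>auto simp: walk_simps\<close>)
  also have "path_eq \<dots> ([Al 0] @ map Al [1..<n - 2] @ [X 1, X 2])"
    by (rule path_eq_in_context[OF path_eq_sym[OF rel_alpha_first], where v="[]"])
       (use four_le_n in \<open>auto simp: walk_simps\<close>)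
  also have "[Al 0] @ map Al [1..<n - 2] @ [X 1, X 2] = zz n 1 @ [xx n (2*1 - 1), xx n (2*1)]"
    using four_le_n by (simp add: zz_eq_zpath zpath_def xx_def bix_id upt_conv_Cons)
  finally show ?thesis
    unfolding relation_II_def using four_le_n
    by (simp add: path_eq_lam_eq xx_def bix_id zz_eq_zpath zpath_def)
qed

lemma relation_II_2: "relation_II n 2"
proof -
  have "path_eq ([X 5, X 6] @ [Ga 1, Be 0]) ([Y4, Al 0] @ [Be 0])"
    by (rule path_eq_in_context[OF rel_beta_first, where u="[]"])
       (use four_le_n in \<open>auto simp: walk_simps\<close>)
  also have "path_eq \<dots> ([Y4] @ [X 3, X 4])"
    by (rule path_eq_in_context[OF path_eq_sym[OF rel_y4], where v="[]"])
       (use four_le_n in \<open>auto simp: walk_simps\<close>)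
  finally show ?thesis
    unfolding relation_II_def using four_le_n
    by (simp add: path_eq_lam_eq xx_def bix_id zz_eq_zpath zpath_def)
qed

lemma relation_II_interior:
  assumes k: "3 \<le> k" "k + 2 \<le> n"
  shows "relation_II n k"
proof -
  have j: "1 \<le> k - 2" "k - 2 + 4 \<le> n" using k by auto
  have "path_eq ([X (2*k + 1), X (2*k + 2)] @ [Ga (k - 1), Be (k - 2)])
      ([Ga (k - 2), Al (k - 2)] @ [Be (k - 2)])"
    by (rule path_eq_in_context[OF rel_beta[OF j], where u="[]"])
       (use k in \<open>auto simp: walk_simps numeral_eq_Suc Suc_diff_Suc\<close>)
  also have "path_eq \<dots> ([Ga (k - 2), Be (k - 3)] @ [X (2*k - 1), X (2*k)])"
    by (rule path_eq_in_context[OF path_eq_sym[OF rel_gamma[OF j]], where v="[]"])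
       (use k in \<open>auto simp: walk_simps numeral_eq_Suc Suc_diff_Suc\<close>)
  finally show ?thesis
    unfolding relation_II_def using k zz_interior[of k] zz_interior[of "k + 1"]
    by (simp add: path_eq_lam_eq xx_def bix_id)
qed

lemma relation_II_penultimate: "relation_II n (n - 1)"
proof -
  have "path_eq ([X (2*n - 1), X (2*n)] @ [Y2n]) ([Ga (n - 3), Al (n - 3)] @ [Y2n])"
    by (rule path_eq_in_context[OF rel_y2n, where u="[]"])
       (use four_le_n in \<open>auto simp: walk_simps\<close>)
  also have "path_eq \<dots> ([Ga (n - 3), Be (n - 4)] @ [X (2*n - 3), X (2*n - 2)])"
    by (rule path_eq_in_context[OF path_eq_sym[OF rel_gamma_last], where v="[]"])
       (use four_le_n in \<open>auto simp: walk_simps\<close>)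
  finally have "lam_eq n (pel n [X (2*n - 1), X (2*n), Y2n])
      (pel n ([Ga (n - 3), Be (n - 4)] @ [X (2*n - 3), X (2*n - 2)]))"
    by (simp add: path_eq_lam_eq)
  moreover have "2*(n - 1) = 2*n - 2" "2*n - 2 + 1 = 2*n - 1" "2*n - 2 + 2 = 2*n"
    "2*n - 2 - 1 = 2*n - 3" "n - 1 + 1 = n"
    using four_le_n by auto
  moreover have "xx n (2*n - 1) = X (2*n - 1)" "xx n (2*n) = X (2*n)"
    "xx n (2*n - 3) = X (2*n - 3)" "xx n (2*n - 2) = X (2*n - 2)"
    using four_le_n by (simp_all add: xx_def bix_id)
  ultimately show ?thesis
    unfolding relation_II_def zz_pred_n by (simp add: zz_n)
qed

lemma relation_II_n: "relation_II n n"
proof -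
  have "[0..<n - 2] = [0..<n - 3] @ [n - 3]"
    using four_le_n upt_append_split[of 0 "n - 3" "n - 2"] by (simp add: upt_conv_Cons)
  then have "path_eq ([X 1, X 2] @ map Al [0..<n - 2]) ([Y2n, Ga (n - 3)] @ [Al (n - 3)])"
    by (intro path_eq_in_context[OF rel_alpha_last, where u="[]"])
       (use four_le_n upt_Suc[of 0 "n - 4"] in \<open>auto simp: walk_simps Suc_diff_Suc numeral_eq_Suc\<close>)
  also have "path_eq \<dots> ([Y2n] @ [X (2*n - 1), X (2*n)])"
    by (rule path_eq_in_context[OF path_eq_sym[OF rel_y2n], where v="[]"])
       (use four_le_n in \<open>auto simp: walk_simps\<close>)
  finally show ?thesis
    unfolding relation_II_def using four_le_n
    by (simp add: path_eq_lam_eq xx_def bix_id bix_wrap zz_Suc_n zz_eq_zpath zpath_def)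
qed

lemma relation_I_holds:
  assumes "1 \<le> k" "k \<le> n"
  shows "relation_I n k"
proof -
  consider "k = 1" | "k = 2" | "k = 3" | "4 \<le> k" "k + 1 \<le> n" | "k = n"
    using assms by linarith
  then show ?thesis
    by cases
       (use relation_I_1 relation_I_2 relation_I_3 relation_I_interior relation_I_n in simp_all)
qed

lemma relation_II_holds:
  assumes "1 \<le> k" "k \<le> n"
  shows "relation_II n k"
proof -
  consider "k = 1" | "k = 2" | "3 \<le> k" "k + 2 \<le> n" | "k = n - 1" | "k = n"
    using assms by linarith
  then show ?thesis
    by cases (use relation_II_1 relation_II_2 relation_II_interior relation_II_penultimate
      relation_II_n in simp_all)
qed

lemma relations_hold: "\<forall>k\<in>{1..n}. relation_I n k \<and> relation_II n k"
  using relation_I_holds relation_II_holds by simp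

end

theorem proposition3p5:
  fixes n :: nat
  assumes "n \<ge> 4"
  shows "\<forall>k\<in>{1..n}.
     lam_eq n (pel n (zz n k @ zz n (k - 1)))
              (pel n (map (xx n) [2*k + 1..<2*k + 2*(n - 2) + 1]))
   \<and> lam_eq n (pel n ([xx n (2*k + 1), xx n (2*k + 2)] @ zz n (k + 1)))
              (pel n (zz n k @ [xx n (2*k - 1), xx n (2*k)]))"
  using relations_hold[OF assms] unfolding relation_I_def relation_II_def .

end
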